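(* A Steiner quadruple system of order $n$ has a spanning Euler tour if and only if $n\ge 8$ and $n\equiv 2$ or $4 \pmod 6$.
   Context: A Steiner quadruple system of order $n$ is a $4$-uniform hypergraph on $n$ vertices (edges are $4$-subsets, called blocks) in which every $3$-subset of vertices is contained in exactly one edge; such systems exist only when $n\equiv 2,4\pmod 6$. A closed walk is a cyclic sequence $v_1,e_1,\dots,v_t,e_t$ of vertices and edges with $\{v_i,v_{i+1}\}\subseteq e_i$ and $v_i\ne v_{i+1}$ for all $i$ (indices modulo $t$). An Euler tour is a closed walk in which every edge occurs exactly once among $e_1,\dots,e_t$; it is spanning if every vertex occurs among $v_1,\dots,v_t$. *)

theory Defs
  imports Main
begin

definition SQS :: "'a set \<Rightarrow> 'a set set \<Rightarrow> bool" where
  "SQS V B \<longleftrightarrow> finite V \<and> (\<forall>e\<in>B. e \<subseteq> V \<and> card e = 4) \<and>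
     (\<forall>T. T \<subseteq> V \<and> card T = 3 \<longrightarrow> (\<exists>!e. e \<in> B \<and> T \<subseteq> e))"

text \<open>A closed walk v_1,e_1,...,v_t,e_t (t \<ge> 1), given by the lists vs = [v_1..v_t]
  and es = [e_1..e_t]; indices are taken modulo t.\<close>
definition closed_walk :: "'a set set \<Rightarrow> 'a list \<Rightarrow> 'a set list \<Rightarrow> bool" where
  "closed_walk B vs es \<longleftrightarrow> length vs = length es \<and> length vs \<ge> 1 \<and>
     (\<forall>i < length vs. es ! i \<in> B \<and>
        {vs ! i, vs ! ((i + 1) mod length vs)} \<subseteq> es ! i \<and>
        vs ! i \<noteq> vs ! ((i + 1) mod length vs))"

definition euler_tour :: "'a set set \<Rightarrow> 'a list \<Rightarrow> 'a set list \<Rightarrow> bool" where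
  "euler_tour B vs es \<longleftrightarrow> closed_walk B vs es \<and> distinct es \<and> set es = B"

definition has_spanning_euler_tour :: "'a set \<Rightarrow> 'a set set \<Rightarrow> bool" where
  "has_spanning_euler_tour V B \<longleftrightarrow> (\<exists>vs es. euler_tour B vs es \<and> V \<subseteq> set vs)"

end

theory Submission
  imports Defs "Graph_Theory.Graph_Theory"
begin

text \<open>
  Necessity: a closed walk whose consecutive vertices differ has at least two edges, so there are
  two distinct blocks and n \<ge> 5; counting the blocks through a pair and through a point gives
  n mod 6 \<in> {2, 4}, which leaves only n \<ge> 8.

  Sufficiency: choosing two points of every block as the ends of an edge turns B into a multigraph
  on V, and an Euler circuit of it is a spanning Euler tour. Fix two points x, y. Counting shows that
  the blocks not containing both x and y can be attached greedily to a spanning tree, with one such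
  block g left over. The other blocks outside the tree get arbitrary edges, g having two choices
  that differ in the parity at one point; then the blocks through x and y, whose remaining points
  pair up V - {x, y}, receive edges that make every degree even. An even connected multigraph has a
  balanced orientation (one of minimal total imbalance), hence an Euler circuit.
\<close>

section \<open>Euler circuits of even connected multigraphs\<close>

definition edge_rel :: "'b set \<Rightarrow> ('b \<Rightarrow> 'a) \<Rightarrow> ('b \<Rightarrow> 'a) \<Rightarrow> 'a rel" where
  "edge_rel E pa pb = (\<Union>e\<in>E. {(pa e, pb e), (pb e, pa e)})"

lemma sym_edge_rel: "sym (edge_rel E pa pb)"
  unfolding edge_rel_def sym_def by auto

lemma sum_card_fibres:
  assumes "finite R" "finite E"
  shows "(\<Sum>z\<in>R. card {e\<in>E. f e = z}) = card {e\<in>E. f e \<in> R}"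
proof -
  have "{e\<in>E. f e \<in> R} = (\<Union>z\<in>R. {e\<in>E. f e = z})" by auto
  moreover have "card (\<Union>z\<in>R. {e\<in>E. f e = z}) = (\<Sum>z\<in>R. card {e\<in>E. f e = z})"
    by (rule card_UN_disjoint) (use assms in auto)
  ultimately show ?thesis by simp
qed

lemma cas_nth_Suc:
  "pre_digraph.cas G u p v \<Longrightarrow> Suc i < length p \<Longrightarrow> tail G (p ! Suc i) = head G (p ! i)"
proof (induction p arbitrary: u i)
  case (Cons e p)
  then show ?case
    by (cases i; cases p) (auto simp: pre_digraph.cas.simps)
qed simp

lemma cas_hd_last:
  "pre_digraph.cas G u p v \<Longrightarrow> p \<noteq> [] \<Longrightarrow> tail G (hd p) = u \<and> head G (last p) = v"
proof (induction p arbitrary: u)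
  case (Cons e p)
  then show ?case
    by (cases p) (auto simp: pre_digraph.cas.simps)
qed simp

locale even_multigraph =
  fixes V :: "'a set" and E :: "'b set" and pa pb :: "'b \<Rightarrow> 'a"
  assumes finite_V: "finite V" and finite_E: "finite E"
    and ends_in_V: "e \<in> E \<Longrightarrow> pa e \<in> V \<and> pb e \<in> V"
    and no_loop: "e \<in> E \<Longrightarrow> pa e \<noteq> pb e"
    and even_degree: "v \<in> V \<Longrightarrow> even (card {e\<in>E. v \<in> {pa e, pb e}})"
begin

definition orient :: "'b set \<Rightarrow> ('a, 'b) pre_digraph" where
  "orient S = \<lparr>verts = V, arcs = E,
     tail = (\<lambda>e. if e \<in> S then pb e else pa e), head = (\<lambda>e. if e \<in> S then pa e else pb e)\<rparr>"

lemma orient_simps [simp]: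
  "verts (orient S) = V" "arcs (orient S) = E"
  "tail (orient S) e = (if e \<in> S then pb e else pa e)"
  "head (orient S) e = (if e \<in> S then pa e else pb e)"
  unfolding orient_def by simp_all

lemma fin_digraph_orient: "fin_digraph (orient S)"
  by unfold_locales (use ends_in_V finite_V finite_E in auto)

definition excess :: "'b set \<Rightarrow> 'a \<Rightarrow> int" where
  "excess S v = pre_digraph.arc_set_balance (orient S) v E"

lemma excess_eq: "excess S v = int (in_degree (orient S) v) - int (out_degree (orient S) v)"
proof -
  have "in_arcs (orient S) v \<inter> E = in_arcs (orient S) v"
    "out_arcs (orient S) v \<inter> E = out_arcs (orient S) v"
    by auto
  then show ?thesis
    unfolding excess_def pre_digraph.arc_set_balance_def in_degree_def out_degree_def by simp
qed

lemma even_excess: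
  assumes "v \<in> V"
  shows "even (excess S v)"
proof -
  have "in_arcs (orient S) v \<union> out_arcs (orient S) v = {e\<in>E. v \<in> {pa e, pb e}}"
    "in_arcs (orient S) v \<inter> out_arcs (orient S) v = {}"
    using no_loop by (auto split: if_splits) metis
  then have "in_degree (orient S) v + out_degree (orient S) v = card {e\<in>E. v \<in> {pa e, pb e}}"
    unfolding in_degree_def out_degree_def
    by (metis card_Un_disjoint fin_digraph.finite_in_arcs fin_digraph.finite_out_arcs
        fin_digraph_orient)
  then have "even (int (in_degree (orient S) v) + int (out_degree (orient S) v))"
    using even_degree[OF assms] by (metis of_nat_add even_of_nat)
  then show ?thesis
    unfolding excess_eq by simp
qed

lemma sum_excess: "(\<Sum>v\<in>V. excess S v) = 0"
proof -
  have "(\<Sum>v\<in>V. in_degree (orient S) v) = card E" "(\<Sum>v\<in>V. out_degree (orient S) v) = card E"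
    using sum_card_fibres[OF finite_V finite_E, of "head (orient S)"]
      sum_card_fibres[OF finite_V finite_E, of "tail (orient S)"] ends_in_V
    unfolding in_degree_def out_degree_def in_arcs_def out_arcs_def
    by (auto intro!: arg_cong[where f = card])
  then show ?thesis
    unfolding excess_eq by (simp add: sum_subtractf flip: of_nat_sum)
qed

lemma excess_reverse:
  assumes "P \<subseteq> E"
  shows "excess (sym_diff S P) v = excess S v - 2 * pre_digraph.arc_set_balance (orient S) v P"
proof -
  let ?S' = "sym_diff S P"
  have finite_P: "finite P" using assms finite_E finite_subset by blast
  have split: "card {e\<in>E. f e = v} = card {e\<in>E - P. f e = v} + card {e\<in>P. f e = v}"
    for f :: "'b \<Rightarrow> 'a"
  proof -
    have "{e\<in>E. f e = v} = {e\<in>E - P. f e = v} \<union> {e\<in>P. f e = v}" using assms by auto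
    then show ?thesis using finite_E finite_P by (simp add: card_Un_disjoint disjoint_iff)
  qed
  have "{e\<in>E - P. head (orient ?S') e = v} = {e\<in>E - P. head (orient S) e = v}"
    "{e\<in>E - P. tail (orient ?S') e = v} = {e\<in>E - P. tail (orient S) e = v}"
    "{e\<in>P. head (orient ?S') e = v} = {e\<in>P. tail (orient S) e = v}"
    "{e\<in>P. tail (orient ?S') e = v} = {e\<in>P. head (orient S) e = v}"
    by auto
  moreover have "in_arcs G v \<inter> A = {e\<in>A. head G e = v}" "out_arcs G v \<inter> A = {e\<in>A. tail G e = v}"
    if "A \<subseteq> arcs G" for G :: "('a, 'b) pre_digraph" and A
    using that by auto
  ultimately show ?thesis
    unfolding excess_def pre_digraph.arc_set_balance_def
    using split[of "head (orient ?S')"] split[of "tail (orient ?S')"]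
      split[of "head (orient S)"] split[of "tail (orient S)"] assms
    by simp
qed

definition imbalance :: "'b set \<Rightarrow> nat" where
  "imbalance S = (\<Sum>v\<in>V. nat \<bar>excess S v\<bar>)"

text \<open>Arcs leaving the set of vertices reachable from v stay inside it, so the total excess of
  that set is nonnegative.\<close>
lemma ex_reachable_positive_excess:
  assumes "v \<in> V" "excess S v < 0"
  shows "\<exists>w. v \<rightarrow>\<^sup>*\<^bsub>orient S\<^esub> w \<and> excess S w > 0"
proof (rule ccontr)
  assume no_surplus: "\<not> ?thesis"
  interpret fin_digraph "orient S" by (rule fin_digraph_orient)
  let ?R = "{w. v \<rightarrow>\<^sup>*\<^bsub>orient S\<^esub> w}"
  have finite_R: "finite ?R"
    using finite_V by (rule finite_subset[rotated]) (auto elim: reachable_in_vertsE)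
  have "v \<in> ?R" using assms by simp
  then have "(\<Sum>w\<in>?R. excess S w) < (\<Sum>w\<in>?R. 0)"
    using no_surplus assms(2) by (intro sum_strict_mono_ex1[OF finite_R]) (auto simp: not_less)
  then have "(\<Sum>w\<in>?R. excess S w) < 0" by simp
  moreover have "{e\<in>E. tail (orient S) e \<in> ?R} \<subseteq> {e\<in>E. head (orient S) e \<in> ?R}"
  proof safe
    fix e assume "v \<rightarrow>\<^sup>*\<^bsub>orient S\<^esub> tail (orient S) e" "e \<in> E"
    moreover have "tail (orient S) e \<rightarrow>\<^bsub>orient S\<^esub> head (orient S) e"
      using \<open>e \<in> E\<close> by (intro dominatesI[of e]) (auto simp: arc_to_ends_def)
    ultimately show "v \<rightarrow>\<^sup>*\<^bsub>orient S\<^esub> head (orient S) e" by (blast intro: reachable_adj_trans)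
  qed
  then have "card {e\<in>E. tail (orient S) e \<in> ?R} \<le> card {e\<in>E. head (orient S) e \<in> ?R}"
    using finite_E by (intro card_mono) auto
  moreover have "(\<Sum>w\<in>?R. excess S w) =
      int (card {e\<in>E. head (orient S) e \<in> ?R}) - int (card {e\<in>E. tail (orient S) e \<in> ?R})"
    unfolding excess_eq in_degree_def out_degree_def in_arcs_def out_arcs_def
    by (simp add: sum_subtractf sum_card_fibres[OF finite_R finite_E] flip: of_nat_sum)
  ultimately show False by linarith
qed

lemma imbalance_reverse_trail:
  assumes trail: "pre_digraph.trail (orient S) v p w" and "v \<noteq> w"
    and excess_v: "excess S v < 0" and excess_w: "excess S w > 0"
  shows "imbalance (sym_diff S (set p)) + 4 = imbalance S"
proof -
  interpret fin_digraph "orient S" by (rule fin_digraph_orient)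
  let ?S' = "sym_diff S (set p)"
  have "set p \<subseteq> E" using trail unfolding trail_def awalk_def by auto
  then have excess': "excess ?S' z = excess S z - 2 * arc_balance z p" for z
    by (rule excess_reverse)
  have "v \<in> V" "w \<in> V" using trail unfolding trail_def by auto
  obtain balance_zero: "\<And>z. z \<in> V \<Longrightarrow> z \<noteq> v \<Longrightarrow> z \<noteq> w \<Longrightarrow> arc_balance z p = 0"
    and "arc_balance v p = -1" "arc_balance w p = 1"
    using trail_arc_balanceE[OF trail] \<open>v \<noteq> w\<close> by (metis orient_simps(1))
  moreover have "excess S v \<le> -2" "excess S w \<ge> 2"
    using even_excess[OF \<open>v \<in> V\<close>, of S] even_excess[OF \<open>w \<in> V\<close>, of S] excess_v excess_w
    by presburger+
  ultimately have at_v: "nat \<bar>excess ?S' v\<bar> + 2 = nat \<bar>excess S v\<bar>"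
    and at_w: "nat \<bar>excess ?S' w\<bar> + 2 = nat \<bar>excess S w\<bar>"
    using excess' by simp_all
  have elsewhere: "(\<Sum>z\<in>V - {v} - {w}. nat \<bar>excess ?S' z\<bar>) = (\<Sum>z\<in>V - {v} - {w}. nat \<bar>excess S z\<bar>)"
    using balance_zero excess' by (intro sum.cong) auto
  have split: "(\<Sum>z\<in>V. f z) = f v + f w + (\<Sum>z\<in>V - {v} - {w}. f z)" for f :: "'a \<Rightarrow> nat"
    using \<open>v \<in> V\<close> \<open>w \<in> V\<close> \<open>v \<noteq> w\<close> finite_V
    by (simp add: sum.remove[of V v] sum.remove[of "V - {v}" w])
  show ?thesis
    unfolding imbalance_def split[of "\<lambda>z. nat \<bar>excess _ z\<bar>"] using at_v at_w elsewhere by simp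
qed

lemma ex_balanced_orientation: "\<exists>S. \<forall>v\<in>V. in_degree (orient S) v = out_degree (orient S) v"
proof -
  obtain S where minimal: "\<And>S'. imbalance S \<le> imbalance S'"
    using ex_has_least_nat[of "\<lambda>_. True" "{}" imbalance] by auto
  show ?thesis
  proof (rule ccontr)
    assume "\<not> ?thesis"
    then obtain v0 where "v0 \<in> V" "excess S v0 \<noteq> 0"
      unfolding excess_eq by (metis eq_iff_diff_eq_0 of_nat_eq_iff)
    then obtain v where v: "v \<in> V" "excess S v < 0"
      using sum_excess[of S] finite_V
      by (metis (no_types, lifting) linorder_neqE_linordered_idom not_less sum_nonneg_eq_0_iff)
    then obtain w where w: "v \<rightarrow>\<^sup>*\<^bsub>orient S\<^esub> w" "excess S w > 0"
      using ex_reachable_positive_excess by blast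
    interpret fin_digraph "orient S" by (rule fin_digraph_orient)
    obtain p where "apath v p w" using w(1) reachable_apath by blast
    then have "trail v p w"
      unfolding apath_def trail_def by (blast intro: distinct_verts_imp_distinct)
    then have "imbalance (sym_diff S (set p)) + 4 = imbalance S"
      using v w by (intro imbalance_reverse_trail) auto
    with minimal show False by (metis add_le_same_cancel1 not_numeral_le_zero)
  qed
qed

lemma symcl_arcs_ends_orient: "(arcs_ends (orient S))\<^sup>s = edge_rel E pa pb"
proof -
  have "(arcs_ends (orient S))\<^sup>s =
      (\<Union>e\<in>E. {(tail (orient S) e, head (orient S) e), (head (orient S) e, tail (orient S) e)})"
    by (auto simp: symcl_def arcs_ends_def arc_to_ends_def)
  also have "\<dots> = edge_rel E pa pb"
    unfolding edge_rel_def by (intro SUP_cong) auto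
  finally show ?thesis .
qed

theorem euler_circuit:
  assumes "E \<noteq> {}" and connected: "\<forall>u\<in>V. \<forall>v\<in>V. (u, v) \<in> (edge_rel E pa pb)\<^sup>*"
  shows "\<exists>vs es. length vs = length es \<and> distinct es \<and> set es = E \<and> set vs = V \<and>
    (\<forall>i<length es. {vs ! i, vs ! ((i + 1) mod length es)} = {pa (es ! i), pb (es ! i)})"
proof -
  obtain S where balanced: "\<forall>v\<in>V. in_degree (orient S) v = out_degree (orient S) v"
    using ex_balanced_orientation by blast
  interpret fin_digraph "orient S" by (rule fin_digraph_orient)
  have "V \<noteq> {}" using \<open>E \<noteq> {}\<close> ends_in_V by blast
  moreover have "(u, v) \<in> rtrancl_on V ((arcs_ends (orient S))\<^sup>s)" if "u \<in> V" "v \<in> V" for u v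
    unfolding symcl_arcs_ends_orient using connected that ends_in_V
    by (intro rtrancl_consistent_rtrancl_on) (auto simp: edge_rel_def)
  ultimately have "connected (orient S)"
    unfolding connected_conv by simp
  then obtain u p where "euler_trail u p u"
    using closed_euler1 balanced by force
  then have cas: "cas u p u" and "distinct p" "set p = E" "set (awalk_verts u p) = V"
    unfolding euler_trail_def trail_def awalk_def by auto
  then have "p \<noteq> []" using \<open>E \<noteq> {}\<close> by auto
  define vs where "vs = map (tail (orient S)) p"
  have next_vertex: "vs ! ((i + 1) mod length p) = head (orient S) (p ! i)" if "i < length p" for i
  proof (cases "Suc i < length p")
    case True
    then show ?thesis using cas_nth_Suc[OF cas] unfolding vs_def by simp
  next
    case False
    then have "i = length p - 1" using that by simp
    then have "(i + 1) mod length p = 0" "p ! i = last p"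
      using \<open>p \<noteq> []\<close> by (auto simp: last_conv_nth)
    then show ?thesis
      using cas_hd_last[OF cas \<open>p \<noteq> []\<close>] \<open>p \<noteq> []\<close> unfolding vs_def by (simp add: hd_conv_nth)
  qed
  have "set vs = V"
    using \<open>set (awalk_verts u p) = V\<close> cas_hd_last[OF cas \<open>p \<noteq> []\<close>] \<open>p \<noteq> []\<close>
    unfolding vs_def by (auto simp: awalk_verts_conv)
  moreover have "{vs ! i, vs ! ((i + 1) mod length p)} = {pa (p ! i), pb (p ! i)}"
    if "i < length p" for i
    using next_vertex[OF that] that unfolding vs_def by auto
  ultimately show ?thesis
    using \<open>distinct p\<close> \<open>set p = E\<close> by (intro exI[of _ vs] exI[of _ p]) (simp add: vs_def)
qed

end

lemma ex_endpoint_functions: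
  assumes "\<forall>e\<in>E. card (ends e) = 2"
  obtains pa pb where "\<forall>e\<in>E. ends e = {pa e, pb e} \<and> pa e \<noteq> pb e"
proof -
  have "\<forall>e\<in>E. \<exists>p. ends e = {fst p, snd p} \<and> fst p \<noteq> snd p"
    using assms by (auto simp: card_2_iff)
  then obtain p where "\<forall>e\<in>E. ends e = {fst (p e), snd (p e)} \<and> fst (p e) \<noteq> snd (p e)"
    by (metis bchoice)
  then show ?thesis using that[of "fst \<circ> p" "snd \<circ> p"] by simp
qed

lemma closed_walk_if_circuit:
  assumes "length vs = length es" "es \<noteq> []" "set es \<subseteq> B"
    and edges: "\<forall>i<length es. {vs ! i, vs ! ((i + 1) mod length es)} = {pa (es ! i), pb (es ! i)}"
    and ends: "\<forall>e\<in>B. {pa e, pb e} \<subseteq> e \<and> pa e \<noteq> pb e"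
  shows "closed_walk B vs es"
  unfolding closed_walk_def
proof (intro conjI allI impI)
  show "length vs = length es" "1 \<le> length vs" using assms(1,2) by (simp_all add: Suc_le_eq)
next
  fix i assume "i < length vs"
  then have i: "i < length es" using assms(1) by simp
  then have "es ! i \<in> B" using assms(3) by auto
  moreover have "{vs ! i, vs ! ((i + 1) mod length vs)} = {pa (es ! i), pb (es ! i)}"
    using edges i assms(1) by simp
  ultimately show "es ! i \<in> B" "{vs ! i, vs ! ((i + 1) mod length vs)} \<subseteq> es ! i"
      "vs ! i \<noteq> vs ! ((i + 1) mod length vs)"
    using ends by (auto simp: doubleton_eq_iff)
qed

section \<open>Counting blocks of a Steiner quadruple system\<close>

lemma two_mult_choose_two: "2 * (m choose 2) = m * (m - 1)"
proof -
  have "even (m * (m - 1))" by (cases m) auto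
  then show ?thesis by (simp add: choose_two)
qed

locale steiner_quadruple_system =
  fixes V :: "'a set" and B :: "'a set set"
  assumes sqs: "SQS V B"
begin

lemma finite_points: "finite V"
  using sqs by (simp add: SQS_def)

lemma block_subset: "e \<in> B \<Longrightarrow> e \<subseteq> V"
  and card_block: "e \<in> B \<Longrightarrow> card e = 4"
  using sqs by (simp_all add: SQS_def)

lemma finite_block: "e \<in> B \<Longrightarrow> finite e"
  using block_subset finite_points finite_subset by blast

lemma finite_blocks: "finite B"
  using block_subset finite_points by (metis Pow_iff finite_Pow_iff finite_subset subsetI)

lemma ex1_block_containing:
  assumes "{a, b, c} \<subseteq> V" "a \<noteq> b" "a \<noteq> c" "b \<noteq> c"
  shows "\<exists>!e. e \<in> B \<and> {a, b, c} \<subseteq> e"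
proof -
  have "card {a, b, c} = 3" using assms by simp
  then show ?thesis using sqs assms(1) unfolding SQS_def by (simp only: simp_thms)
qed

lemma ex_block_containing:
  assumes "{a, b, c} \<subseteq> V" "a \<noteq> b" "a \<noteq> c" "b \<noteq> c"
  obtains e where "e \<in> B" "{a, b, c} \<subseteq> e"
  using ex1_block_containing[OF assms] that by auto

lemma block_other_point:
  assumes "e \<in> B"
  shows "\<exists>c\<in>e. c \<noteq> u"
proof -
  have "\<not> e \<subseteq> {u}"
  proof
    assume "e \<subseteq> {u}"
    then have "card e \<le> 1" using card_mono[of "{u}" e] by simp
    then show False using card_block[OF assms] by simp
  qed
  then show ?thesis by blast
qed

lemma ex_point_outside:
  assumes "C \<subseteq> V" "card C < card V"
  shows "\<exists>u. u \<in> V - C"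
  using assms finite_points card_mono[of C V] by (metis Diff_eq_empty_iff finite_subset not_le ex_in_conv)

lemma block_eqI:
  assumes "e \<in> B" "f \<in> B" "{a, b, c} \<subseteq> e" "{a, b, c} \<subseteq> f" "a \<noteq> b" "a \<noteq> c" "b \<noteq> c"
  shows "e = f"
proof -
  have "{a, b, c} \<subseteq> V" using assms(1,3) block_subset by blast
  with ex1_block_containing[OF _ assms(5-7)] show ?thesis using assms(1-4) by auto
qed

lemma card_blocks_containing_three_le:
  assumes "a \<noteq> b" "a \<noteq> c" "b \<noteq> c"
  shows "card {e\<in>B. {a, b, c} \<subseteq> e} \<le> 1"
  using block_eqI[OF _ _ _ _ assms] finite_blocks by (simp add: card_le_Suc0_iff_eq)

lemma card_blocks_containing_pair:
  assumes "p \<in> V" "q \<in> V" "p \<noteq> q"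
  shows "2 * card {e\<in>B. {p, q} \<subseteq> e} + 2 = card V"
proof -
  let ?F = "{e\<in>B. {p, q} \<subseteq> e}"
  have partition: "(\<Union>e\<in>?F. e - {p, q}) = V - {p, q}"
  proof
    show "(\<Union>e\<in>?F. e - {p, q}) \<subseteq> V - {p, q}" using block_subset by auto
    show "V - {p, q} \<subseteq> (\<Union>e\<in>?F. e - {p, q})"
    proof
      fix z assume "z \<in> V - {p, q}"
      with assms have z: "{p, q, z} \<subseteq> V" "p \<noteq> z" "q \<noteq> z" by auto
      obtain e where "e \<in> B" "{p, q, z} \<subseteq> e"
        by (rule ex_block_containing[OF z(1) assms(3) z(2,3)])
      with \<open>z \<in> V - {p, q}\<close> show "z \<in> (\<Union>e\<in>?F. e - {p, q})" by auto
    qed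
  qed
  have disjoint: "(e - {p, q}) \<inter> (f - {p, q}) = {}" if "e \<in> ?F" "f \<in> ?F" "e \<noteq> f" for e f
    using that block_eqI[of e f p q] assms by auto
  have "card (V - {p, q}) = (\<Sum>e\<in>?F. card (e - {p, q}))"
    unfolding partition[symmetric]
    by (rule card_UN_disjoint) (use finite_blocks finite_block disjoint in auto)
  also have "\<dots> = (\<Sum>e\<in>?F. 2)"
    using assms by (intro sum.cong) (auto simp: card_Diff_subset finite_block card_block)
  moreover have "card {p, q} \<le> card V"
    using assms finite_points by (intro card_mono) auto
  ultimately show ?thesis
    using assms finite_points by (simp add: card_Diff_subset)
qed

definition two_subsets :: "'b set \<Rightarrow> 'b set set" where
  "two_subsets S = {P. P \<subseteq> S \<and> card P = 2}"

lemma finite_two_subsets: "finite S \<Longrightarrow> finite (two_subsets S)"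
  unfolding two_subsets_def by (rule finite_subset[of _ "Pow S"]) auto

lemma card_two_subsets: "finite S \<Longrightarrow> card (two_subsets S) = card S choose 2"
  unfolding two_subsets_def by (simp add: n_subsets)

text \<open>Distinct blocks through u share no further pair of points, so the 2-subsets of the
  residual triples e - {u} are pairwise disjoint.\<close>
lemma card_residual_pairs:
  assumes "G \<subseteq> {e\<in>B. u \<in> e}"
  shows "card (\<Union>e\<in>G. two_subsets (e - {u})) = 3 * card G"
proof -
  have finite_G: "finite G" by (rule finite_subset[OF _ finite_blocks]) (use assms in auto)
  have disjoint: "two_subsets (e - {u}) \<inter> two_subsets (f - {u}) = {}"
    if "e \<in> G" "f \<in> G" "e \<noteq> f" for e f
  proof (rule ccontr)
    assume "two_subsets (e - {u}) \<inter> two_subsets (f - {u}) \<noteq> {}"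
    then obtain P where "P \<subseteq> e - {u}" "P \<subseteq> f - {u}" "card P = 2"
      unfolding two_subsets_def by blast
    moreover from \<open>card P = 2\<close> obtain a b where "P = {a, b}" "a \<noteq> b"
      by (meson card_2_iff)
    ultimately have "{u, a, b} \<subseteq> e" "{u, a, b} \<subseteq> f" "u \<noteq> a" "u \<noteq> b" "a \<noteq> b"
      using that assms by auto
    then show False using block_eqI[of e f u a b] that assms by blast
  qed
  have card_residual: "card (two_subsets (e - {u})) = 3" if "e \<in> G" for e
  proof -
    have "finite (e - {u})" using that assms finite_block by blast
    moreover have "card (e - {u}) = 3" using that assms card_block finite_block by auto
    ultimately show ?thesis by (simp add: card_two_subsets choose_two)
  qed
  have "card (\<Union>e\<in>G. two_subsets (e - {u})) = (\<Sum>e\<in>G. card (two_subsets (e - {u})))"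
  proof (rule card_UN_disjoint[OF finite_G])
    show "\<forall>e\<in>G. finite (two_subsets (e - {u}))"
      using assms finite_block by (blast intro: finite_two_subsets)
  qed (use disjoint in blast)
  also have "\<dots> = 3 * card G" using card_residual by simp
  finally show ?thesis .
qed

lemma card_blocks_containing_point:
  assumes "u \<in> V"
  shows "6 * card {e\<in>B. u \<in> e} = (card V - 1) * (card V - 2)"
proof -
  have "(\<Union>e\<in>{e\<in>B. u \<in> e}. two_subsets (e - {u})) = two_subsets (V - {u})"
  proof
    show "(\<Union>e\<in>{e\<in>B. u \<in> e}. two_subsets (e - {u})) \<subseteq> two_subsets (V - {u})"
      using block_subset by (auto simp: two_subsets_def)
    show "two_subsets (V - {u}) \<subseteq> (\<Union>e\<in>{e\<in>B. u \<in> e}. two_subsets (e - {u}))"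
    proof
      fix P assume "P \<in> two_subsets (V - {u})"
      then obtain a b where "P = {a, b}" "a \<noteq> b" "{a, b} \<subseteq> V - {u}"
        unfolding two_subsets_def by (auto simp: card_2_iff)
      with assms have uab: "{u, a, b} \<subseteq> V" "u \<noteq> a" "u \<noteq> b" by auto
      obtain e where "e \<in> B" "{u, a, b} \<subseteq> e"
        by (rule ex_block_containing[OF uab \<open>a \<noteq> b\<close>])
      with \<open>P = {a, b}\<close> \<open>a \<noteq> b\<close> \<open>{a, b} \<subseteq> V - {u}\<close>
      show "P \<in> (\<Union>e\<in>{e\<in>B. u \<in> e}. two_subsets (e - {u}))" by (auto simp: two_subsets_def)
    qed
  qed
  then have "3 * card {e\<in>B. u \<in> e} = card (V - {u}) choose 2"
    using card_residual_pairs[of "{e\<in>B. u \<in> e}" u] finite_points by (simp add: card_two_subsets)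
  also have "card (V - {u}) = card V - 1"
    using assms finite_points by simp
  finally have "6 * card {e\<in>B. u \<in> e} = 2 * (card V - 1 choose 2)" by simp
  also have "\<dots> = (card V - 1) * (card V - 1 - 1)" by (rule two_mult_choose_two)
  finally show ?thesis by (simp add: numeral_2_eq_2)
qed

lemma card_blocks_containing_point_within:
  assumes "u \<in> V" "S \<subseteq> V - {u}"
  shows "6 * card {e\<in>B. u \<in> e \<and> e - {u} \<subseteq> S} \<le> card S * (card S - 1)"
proof -
  let ?G = "{e\<in>B. u \<in> e \<and> e - {u} \<subseteq> S}"
  have finite_S: "finite S" using assms finite_points finite_subset by blast
  have "(\<Union>e\<in>?G. two_subsets (e - {u})) \<subseteq> two_subsets S" by (auto simp: two_subsets_def)
  then have "card (\<Union>e\<in>?G. two_subsets (e - {u})) \<le> card (two_subsets S)"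
    by (rule card_mono[OF finite_two_subsets[OF finite_S]])
  then have "card (\<Union>e\<in>?G. two_subsets (e - {u})) \<le> card S choose 2"
    by (simp only: card_two_subsets[OF finite_S])
  moreover have "card (\<Union>e\<in>?G. two_subsets (e - {u})) = 3 * card ?G"
    by (rule card_residual_pairs) auto
  ultimately have "6 * card ?G \<le> 2 * (card S choose 2)" by simp
  then show ?thesis by (simp only: two_mult_choose_two)
qed

lemma card_blocks_containing_avoiding:
  assumes "a \<in> V" "b \<in> V" "a \<noteq> b"
  shows "6 * card {e\<in>B. a \<in> e \<and> b \<notin> e} + 3 * (card V - 2) = (card V - 1) * (card V - 2)"
proof -
  let ?X = "{e\<in>B. a \<in> e \<and> b \<notin> e}" and ?Y = "{e\<in>B. {a, b} \<subseteq> e}"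
  have "{e\<in>B. a \<in> e} = ?X \<union> ?Y" by auto
  then have "card {e\<in>B. a \<in> e} = card ?X + card ?Y"
    using finite_blocks by (simp add: card_Un_disjoint disjoint_iff)
  moreover have "card V - 2 = 2 * card ?Y"
    using card_blocks_containing_pair[OF assms] by linarith
  ultimately have "6 * card ?X + 3 * (card V - 2) = 6 * card {e\<in>B. a \<in> e}"
    by (simp only:) simp
  also have "\<dots> = (card V - 1) * (card V - 2)"
    by (rule card_blocks_containing_point[OF assms(1)])
  finally show ?thesis .
qed

lemma ex_two_points:
  assumes "card V \<ge> 2"
  obtains p q where "p \<in> V" "q \<in> V" "p \<noteq> q"
proof -
  obtain P where "P \<subseteq> V" "card P = 2"
    using assms by (meson obtain_subset_with_card_n)
  moreover from \<open>card P = 2\<close> obtain p q where "P = {p, q}" "p \<noteq> q"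
    by (meson card_2_iff)
  ultimately show ?thesis using that by auto
qed

lemma order_mod_6:
  assumes "card V \<ge> 2"
  shows "card V mod 6 = 2 \<or> card V mod 6 = 4"
proof -
  obtain p q where pq: "p \<in> V" "q \<in> V" "p \<noteq> q"
    using ex_two_points[OF assms] by blast
  obtain m where m: "card V = m + 2"
    using assms le_Suc_ex by (metis add.commute)
  have "even (card V)"
    using card_blocks_containing_pair[OF pq] by presburger
  moreover have "card V mod 3 \<noteq> 0"
  proof
    assume "card V mod 3 = 0"
    then have "(m + 1) mod 3 = 2" "m mod 3 = 1" using m by presburger+
    then have "((m + 1) * m) mod 3 = 2"
      using mod_mult_eq[of "m + 1" 3 m] by simp
    moreover have "(m + 1) * m = 3 * (2 * card {e\<in>B. p \<in> e})"
      using card_blocks_containing_point[OF pq(1)] m by simp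
    ultimately show False by simp
  qed
  ultimately show ?thesis by presburger
qed

lemma card_points_ge_5:
  assumes "e \<in> B" "f \<in> B" "e \<noteq> f"
  shows "card V \<ge> 5"
proof -
  have "card e < card (e \<union> f)"
  proof (rule psubset_card_mono)
    show "finite (e \<union> f)" using assms finite_block by blast
    have "\<not> f \<subseteq> e"
      using assms card_block card_subset_eq[OF finite_block[OF assms(1)], of f] by auto
    then show "e \<subset> e \<union> f" by blast
  qed
  moreover have "card (e \<union> f) \<le> card V"
    using assms block_subset finite_points by (intro card_mono) auto
  ultimately show ?thesis using assms(1) card_block by simp
qed

end

section \<open>Parity of degrees\<close>

lemma sum_degrees:
  assumes "finite V" "finite A" "\<forall>e\<in>A. ends e \<subseteq> V \<and> card (ends e) = 2"
  shows "(\<Sum>v\<in>V. card {e\<in>A. v \<in> ends e}) = 2 * card A"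
proof -
  have "(\<Sum>v\<in>V. card {e\<in>A. v \<in> ends e}) = (\<Sum>v\<in>V. \<Sum>e\<in>A. of_bool (v \<in> ends e))"
    using assms(2) by (intro sum.cong) (simp_all add: Int_def)
  also have "\<dots> = (\<Sum>e\<in>A. \<Sum>v\<in>V. of_bool (v \<in> ends e))"
    by (rule sum.swap)
  also have "\<dots> = (\<Sum>e\<in>A. 2)"
  proof (rule sum.cong)
    fix e assume "e \<in> A"
    then have "V \<inter> {v. v \<in> ends e} = ends e" using assms(3) by auto
    then show "(\<Sum>v\<in>V. of_bool (v \<in> ends e)) = (2::nat)"
      using assms \<open>e \<in> A\<close> by simp
  qed simp
  finally show ?thesis by simp
qed

lemma even_card_odd_degree:
  assumes "finite V" "finite A" "\<forall>e\<in>A. ends e \<subseteq> V \<and> card (ends e) = 2"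
  shows "even (card {v\<in>V. odd (card {e\<in>A. v \<in> ends e})})"
  using sum_degrees[OF assms] even_sum_iff[OF assms(1), of "\<lambda>v. card {e\<in>A. v \<in> ends e}"] by simp

text \<open>The odd-degree set has even size, so its trace on V - {y} determines whether it contains y.\<close>
lemma odd_degree_determined:
  assumes "finite V" "finite A" "\<forall>e\<in>A. ends e \<subseteq> V \<and> card (ends e) = 2"
    and "Od \<subseteq> V" "even (card Od)" "y \<in> V"
    and others: "\<forall>v\<in>V - {y}. odd (card {e\<in>A. v \<in> ends e}) \<longleftrightarrow> v \<in> Od"
  shows "odd (card {e\<in>A. y \<in> ends e}) \<longleftrightarrow> y \<in> Od"
proof -
  let ?S = "{v\<in>V. odd (card {e\<in>A. v \<in> ends e})}"
  have "even (card ?S)" by (rule even_card_odd_degree[OF assms(1-3)])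
  have finite: "finite ?S" "finite Od" using assms(1,4) finite_subset by auto
  have "?S - {y} = Od - {y}" using others assms(4) by auto
  show ?thesis
  proof (rule ccontr)
    assume "\<not> ?thesis"
    then consider "y \<in> ?S" "y \<notin> Od" | "y \<in> Od" "y \<notin> ?S" using assms(6) by auto
    then show False
    proof cases
      case 1
      then have "?S = insert y Od" using \<open>?S - {y} = Od - {y}\<close> by blast
      then show False using finite 1 \<open>even (card ?S)\<close> \<open>even (card Od)\<close> by simp
    next
      case 2
      then have "Od = insert y ?S" using \<open>?S - {y} = Od - {y}\<close> by blast
      then show False using finite 2 \<open>even (card ?S)\<close> \<open>even (card Od)\<close> by simp
    qed
  qed
qed

lemma odd_degree_update:
  assumes "finite E" "g \<in> E"
  shows "odd (card {e\<in>E. v \<in> (ends(g := A)) e}) \<longleftrightarrow>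
    (odd (card {e\<in>E. v \<in> ends e}) \<longleftrightarrow> (v \<in> A \<longleftrightarrow> v \<in> ends g))"
proof -
  let ?rest = "{e\<in>E - {g}. v \<in> ends e}"
  have "card {e\<in>E. v \<in> f e} = card {e\<in>E - {g}. v \<in> f e} + of_bool (v \<in> f g)" for f :: "'a \<Rightarrow> 'b set"
  proof -
    have "{e\<in>E. v \<in> f e} = {e\<in>E - {g}. v \<in> f e} \<union> (if v \<in> f g then {g} else {})"
      using assms(2) by auto
    then show ?thesis using assms(1) by (simp add: card_Un_disjoint)
  qed
  moreover have "{e\<in>E - {g}. v \<in> (ends(g := A)) e} = ?rest" by auto
  ultimately show ?thesis
    by (cases "v \<in> A"; cases "v \<in> ends g") simp_all
qed

lemma card_pair_inter_eq_1_if_flip: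
  assumes "a \<noteq> b" "a \<in> S' \<longleftrightarrow> a \<notin> S" "b \<in> S' \<longleftrightarrow> b \<in> S"
  shows "card ({a, b} \<inter> S) = 1 \<or> card ({a, b} \<inter> S') = 1"
  using assms by (cases "a \<in> S"; cases "b \<in> S") auto

section \<open>Spanning trees of blocks avoiding a pair\<close>

definition link_rel :: "'b set \<Rightarrow> ('b \<Rightarrow> 'a set) \<Rightarrow> 'a rel" where
  "link_rel E ends = {(a, b). \<exists>e\<in>E. ends e = {a, b}}"

locale sqs_with_pair = steiner_quadruple_system +
  fixes x y :: 'a
  assumes x_in_V: "x \<in> V" and y_in_V: "y \<in> V" and x_neq_y: "x \<noteq> y"
    and order_ge_8: "card V \<ge> 8"
begin

lemma order_ge_8_bound: "6 * (card V - 1) + 6 * (card V - 2) < 2 * ((card V - 1) * (card V - 2))"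
  and order_ge_8_point_bound: "6 * (card V - 2) < (card V - 1) * (card V - 2)"
proof -
  obtain d where "card V = 8 + d" using order_ge_8 le_Suc_ex by blast
  then show "6 * (card V - 1) + 6 * (card V - 2) < 2 * ((card V - 1) * (card V - 2))"
    "6 * (card V - 2) < (card V - 1) * (card V - 2)"
    by (simp_all add: algebra_simps)
qed

lemma order_ge_8_attach_bound:
  assumes "1 \<le> c" "c + 3 \<le> card V"
  shows "(card V - c - 1) * (card V - c - 2) + 6 * c < (card V - 1) * (card V - 2)"
proof -
  obtain d where d: "card V = c + 3 + d" using assms(2) le_Suc_ex by (metis add.commute)
  have "6 * c < (c + 2 * d + 3) * c"
    using d assms(1) order_ge_8 by (intro mult_strict_right_mono) auto
  then show ?thesis using d by (simp add: algebra_simps)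
qed

definition pair_blocks :: "'a set set" where
  "pair_blocks = {e\<in>B. {x, y} \<subseteq> e}"

lemma card_pair_blocks_containing_le:
  assumes "u \<noteq> x" "u \<noteq> y"
  shows "card {e\<in>pair_blocks. u \<in> e} \<le> 1"
proof -
  have "{e\<in>pair_blocks. u \<in> e} = {e\<in>B. {x, y, u} \<subseteq> e}" unfolding pair_blocks_def by auto
  then show ?thesis using card_blocks_containing_three_le x_neq_y assms by auto
qed

lemma ex1_pair_block_containing:
  assumes "u \<in> V" "u \<noteq> x" "u \<noteq> y"
  shows "\<exists>!e. e \<in> pair_blocks \<and> u \<in> e"
  using ex1_block_containing[of x y u] assms x_in_V y_in_V x_neq_y
  unfolding pair_blocks_def by (simp add: Ex1_def)

lemma card_pair_block_residue:
  assumes "e \<in> pair_blocks"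
  shows "card (e - {x, y}) = 2"
  using assms x_neq_y card_block finite_block unfolding pair_blocks_def
  by (simp add: card_Diff_subset)

text \<open>Each block e in T contributes the edge ends e; connected with card C - 1 edges, this
  graph on C is a tree.\<close>
definition block_tree :: "'a set \<Rightarrow> 'a set set \<Rightarrow> ('a set \<Rightarrow> 'a set) \<Rightarrow> bool" where
  "block_tree C T ends \<longleftrightarrow> C \<subseteq> V \<and> x \<in> C \<and> T \<subseteq> B - pair_blocks \<and> finite T \<and>
     card T + 1 = card C \<and> (\<forall>e\<in>T. ends e \<subseteq> e \<inter> C \<and> card (ends e) = 2) \<and>
     (\<forall>z\<in>C. (x, z) \<in> (link_rel T ends)\<^sup>*)"

lemma block_tree_root: "block_tree {x} {} ends"
  unfolding block_tree_def using x_in_V by auto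

lemma block_tree_insert:
  assumes tree: "block_tree C T ends" and u: "u \<in> V - C" and e: "e \<in> B - pair_blocks - T"
    and c: "c \<in> C" "c \<in> e" and "u \<in> e"
  shows "block_tree (insert u C) (insert e T) (ends(e := {c, u}))"
proof -
  let ?ends' = "ends(e := {c, u})"
  have "link_rel T ends \<subseteq> link_rel (insert e T) ?ends'"
    using e unfolding link_rel_def by auto
  then have "(x, z) \<in> (link_rel (insert e T) ?ends')\<^sup>*" if "z \<in> C" for z
    using tree that rtrancl_mono unfolding block_tree_def by blast
  moreover have "(c, u) \<in> link_rel (insert e T) ?ends'"
    unfolding link_rel_def by auto
  ultimately have connected: "(x, z) \<in> (link_rel (insert e T) ?ends')\<^sup>*" if "z \<in> insert u C" for z
    using that c by (auto intro: rtrancl_into_rtrancl)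
  have "finite C" using tree finite_points finite_subset unfolding block_tree_def by blast
  moreover have "c \<noteq> u" using u c by auto
  ultimately show ?thesis
    using tree u e c \<open>u \<in> e\<close> connected unfolding block_tree_def by auto
qed

text \<open>A block through u is useless only if it misses C, contains x and y, or is already used;
  for card C \<le> card V - 3 these are fewer than all blocks through u.\<close>
lemma ex_attaching_block:
  assumes tree: "block_tree C T ends" and u: "u \<in> V - C" "u \<noteq> y"
    and small: "card C + 3 \<le> card V"
  shows "\<exists>e\<in>B - pair_blocks - T. u \<in> e \<and> C \<inter> e \<noteq> {}"
proof (rule ccontr)
  assume none: "\<not> ?thesis"
  let ?n = "card V" and ?c = "card C"
  let ?outside = "{e\<in>B. u \<in> e \<and> e - {u} \<subseteq> V - C - {u}}"
  have C: "C \<subseteq> V" "x \<in> C" "finite T" "card T + 1 = ?c"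
    using tree unfolding block_tree_def by auto
  then have "u \<noteq> x" using u by auto
  have "{e\<in>B. u \<in> e} \<subseteq> ?outside \<union> {e\<in>pair_blocks. u \<in> e} \<union> T"
    using none block_subset unfolding pair_blocks_def by blast
  then have "card {e\<in>B. u \<in> e} \<le> card (?outside \<union> {e\<in>pair_blocks. u \<in> e} \<union> T)"
    using finite_blocks C unfolding pair_blocks_def by (intro card_mono) auto
  also have "\<dots> \<le> card ?outside + card {e\<in>pair_blocks. u \<in> e} + card T"
    by (meson add_mono card_Un_le order_trans le_refl)
  finally have "card {e\<in>B. u \<in> e} \<le> card ?outside + 1 + card T"
    using card_pair_blocks_containing_le[OF \<open>u \<noteq> x\<close> u(2)] by linarith
  moreover have "card (V - C - {u}) = ?n - ?c - 1"
    using C u finite_points by (simp add: card_Diff_subset finite_subset)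
  then have "6 * card ?outside \<le> (?n - ?c - 1) * (?n - ?c - 2)"
    using card_blocks_containing_point_within[of u "V - C - {u}"] u by (auto simp: diff_diff_add)
  moreover have "6 * card {e\<in>B. u \<in> e} = (?n - 1) * (?n - 2)"
    using u by (simp add: card_blocks_containing_point)
  ultimately have "(?n - 1) * (?n - 2) \<le> (?n - ?c - 1) * (?n - ?c - 2) + 6 * ?c"
    using C by linarith
  moreover have "?c \<ge> 1"
    using C finite_points by (metis card_0_eq empty_iff finite_subset le_less_linear less_one)
  ultimately show False using order_ge_8_attach_bound[of ?c] small by linarith
qed

lemma block_tree_grow:
  assumes "block_tree C T ends" "u \<in> V - C" "u \<noteq> y" "card C + 3 \<le> card V"
  shows "\<exists>T' ends'. block_tree (insert u C) T' ends'"
proof -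
  obtain e c where "e \<in> B - pair_blocks - T" "u \<in> e" "c \<in> C" "c \<in> e"
    using ex_attaching_block[OF assms] by blast
  then show ?thesis using block_tree_insert assms(1,2) by blast
qed

text \<open>The greedy count fails for y, which lies in many blocks with x; instead y is attached to a
  point u by a block through u and y avoiding x.\<close>
lemma block_tree_add_y:
  assumes tree: "block_tree {x, u} T ends" and "u \<noteq> x" "u \<noteq> y"
  shows "\<exists>T' ends'. block_tree {x, u, y} T' ends'"
proof -
  have "u \<in> V" using tree unfolding block_tree_def by auto
  have "2 * card {e\<in>B. {u, y} \<subseteq> e} + 2 = card V"
    using card_blocks_containing_pair[OF \<open>u \<in> V\<close> y_in_V] assms by simp
  then have "card {e\<in>B. {x, u, y} \<subseteq> e} < card {e\<in>B. {u, y} \<subseteq> e}"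
    using card_blocks_containing_three_le[of x u y] x_neq_y assms order_ge_8 by simp
  moreover have "card {e\<in>B. {u, y} \<subseteq> e} \<le> card {e\<in>B. {x, u, y} \<subseteq> e}"
    if "{e\<in>B. {u, y} \<subseteq> e} \<subseteq> {e\<in>B. {x, u, y} \<subseteq> e}"
    using that finite_blocks by (intro card_mono) auto
  ultimately obtain e where e: "e \<in> B" "u \<in> e" "y \<in> e" "x \<notin> e"
    by force
  have "e \<notin> T"
  proof
    assume "e \<in> T"
    then have "ends e \<subseteq> e \<inter> {x, u}" "card (ends e) = 2" using tree unfolding block_tree_def by auto
    moreover have "card {x, u} = 2" using assms(2) by simp
    ultimately have "ends e = {x, u}" by (intro card_subset_eq) auto
    with \<open>ends e \<subseteq> e \<inter> {x, u}\<close> \<open>x \<notin> e\<close> show False by auto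
  qed
  moreover have "e \<notin> pair_blocks" using e unfolding pair_blocks_def by auto
  ultimately have "block_tree (insert y {x, u}) (insert e T) (ends(e := {u, y}))"
    using block_tree_insert[OF tree _ _ _ e(2,3)] y_in_V assms x_neq_y e(1) by auto
  then show ?thesis by (metis insert_commute)
qed

lemma ex_free_block_containing:
  assumes "u \<in> V" "u \<noteq> x" "u \<noteq> y" "finite T" "card T + 3 \<le> card V"
  shows "\<exists>f\<in>B - pair_blocks - T. u \<in> f"
proof (rule ccontr)
  assume "\<not> ?thesis"
  then have "{e\<in>B. u \<in> e} \<subseteq> T \<union> {e\<in>pair_blocks. u \<in> e}"
    unfolding pair_blocks_def by auto
  then have "card {e\<in>B. u \<in> e} \<le> card (T \<union> {e\<in>pair_blocks. u \<in> e})"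
    using assms(4) finite_blocks unfolding pair_blocks_def by (intro card_mono) auto
  also have "\<dots> \<le> card T + 1"
    using card_Un_le[of T "{e\<in>pair_blocks. u \<in> e}"] card_pair_blocks_containing_le[OF assms(2,3)]
    by linarith
  finally show False
    using card_blocks_containing_point[OF assms(1)] assms(5) order_ge_8_point_bound by linarith
qed

text \<open>For the last two points u, w the greedy count fails too: u is attached by a block avoiding w,
  and then w still has a free block since only card V - 2 blocks are used.\<close>
lemma block_tree_complete_with:
  assumes tree: "block_tree C T ends" "y \<in> C" and rest: "V - C = {u, w}" "u \<noteq> w"
    and e: "e \<in> B - pair_blocks - T" "u \<in> e" "w \<notin> e"
  shows "\<exists>T' ends'. block_tree V T' ends'"
proof -
  have C: "C \<subseteq> V" "x \<in> C" "finite T" "card T + 1 = card C"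
    using tree(1) unfolding block_tree_def by auto
  have "card (V - C) = 2" using rest by simp
  then have "card T + 3 = card V"
    using C finite_points by (simp add: card_Diff_subset finite_subset)
  obtain c where "c \<in> e" "c \<noteq> u" using block_other_point e(1) by blast
  then have "c \<in> C" using e rest block_subset by auto
  have tree1: "block_tree (insert u C) (insert e T) (ends(e := {c, u}))"
    using block_tree_insert[OF tree(1) _ e(1) \<open>c \<in> C\<close> \<open>c \<in> e\<close> e(2)] rest by auto
  obtain f where "f \<in> B - pair_blocks - T" "w \<in> f"
    using ex_free_block_containing[of w T] rest C tree(2) \<open>card T + 3 = card V\<close> by auto
  moreover obtain c' where "c' \<in> f" "c' \<noteq> w" using block_other_point calculation(1) by blast
  moreover have "c' \<in> insert u C" using calculation rest block_subset by auto
  ultimately have "block_tree (insert w (insert u C)) (insert f (insert e T))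
      ((ends(e := {c, u}))(f := {c', w}))"
    using block_tree_insert[OF tree1] rest e(3) by auto
  moreover have "insert w (insert u C) = V" using rest C by auto
  ultimately show ?thesis by auto
qed

lemma block_tree_complete:
  assumes tree: "block_tree C T ends" "y \<in> C" and two_left: "card C + 2 = card V"
  shows "\<exists>T' ends'. block_tree V T' ends'"
proof (rule ccontr)
  assume incomplete: "\<not> ?thesis"
  have C: "C \<subseteq> V" "x \<in> C" "finite T" "card T + 1 = card C"
    using tree(1) unfolding block_tree_def by auto
  have "card (V - C) = 2"
    using two_left C finite_points by (simp add: card_Diff_subset finite_subset)
  then obtain u w where rest: "V - C = {u, w}" "u \<noteq> w" by (meson card_2_iff)
  have bound: "card {e\<in>B. a \<in> e \<and> b \<notin> e} \<le> card {e\<in>T. a \<in> e \<and> b \<notin> e} + 1"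
    if "V - C = {a, b}" "a \<noteq> b" for a b
  proof -
    have "{e\<in>B. a \<in> e \<and> b \<notin> e} \<subseteq> {e\<in>T. a \<in> e \<and> b \<notin> e} \<union> {e\<in>pair_blocks. a \<in> e}"
      using block_tree_complete_with[OF tree(1,2) that] incomplete unfolding pair_blocks_def
      by blast
    then have "card {e\<in>B. a \<in> e \<and> b \<notin> e} \<le> card ({e\<in>T. a \<in> e \<and> b \<notin> e} \<union> {e\<in>pair_blocks. a \<in> e})"
      using C finite_blocks unfolding pair_blocks_def by (intro card_mono) auto
    also have "\<dots> \<le> card {e\<in>T. a \<in> e \<and> b \<notin> e} + 1"
    proof -
      have "a \<noteq> x" "a \<noteq> y" using that C(2) tree(2) by auto
      then show ?thesis
        using card_Un_le[of "{e\<in>T. a \<in> e \<and> b \<notin> e}" "{e\<in>pair_blocks. a \<in> e}"]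
          card_pair_blocks_containing_le by fastforce
    qed
    finally show ?thesis .
  qed
  have "u \<in> V" "w \<in> V" "V - C = {w, u}" using rest by auto
  have "card {e\<in>T. u \<in> e \<and> w \<notin> e} + card {e\<in>T. w \<in> e \<and> u \<notin> e} \<le> card T"
    using C by (subst card_Un_disjoint[symmetric]) (auto intro: card_mono)
  then have "2 * ((card V - 1) * (card V - 2)) \<le> 6 * (card V - 1) + 6 * (card V - 2)"
    using bound[OF rest] bound[OF \<open>V - C = {w, u}\<close> rest(2)[symmetric]]
      card_blocks_containing_avoiding[OF \<open>u \<in> V\<close> \<open>w \<in> V\<close> rest(2)]
      card_blocks_containing_avoiding[OF \<open>w \<in> V\<close> \<open>u \<in> V\<close> rest(2)[symmetric]]
      C(4) two_left
    by linarith
  then show False using order_ge_8_bound by linarith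
qed

lemma block_tree_extend:
  assumes "block_tree C T ends" "y \<in> C" "card C + 2 + k = card V"
  shows "\<exists>T' ends'. block_tree V T' ends'"
  using assms
proof (induction k arbitrary: C T ends)
  case 0
  then show ?case using block_tree_complete by simp
next
  case (Suc k)
  have "C \<subseteq> V" using Suc.prems(1) unfolding block_tree_def by auto
  then obtain u where "u \<in> V - C" using ex_point_outside Suc.prems(3) by fastforce
  then obtain T' ends' where "block_tree (insert u C) T' ends'"
    using block_tree_grow Suc.prems by fastforce
  moreover have "card (insert u C) = card C + 1"
    using \<open>u \<in> V - C\<close> \<open>C \<subseteq> V\<close> finite_points finite_subset by fastforce
  ultimately show ?case using Suc.IH Suc.prems(2,3) by fastforce
qed

lemma ex_spanning_block_tree: "\<exists>T ends. block_tree V T ends"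
proof -
  have "\<exists>u. u \<in> V - {x, y}"
    by (rule ex_point_outside) (use x_in_V y_in_V x_neq_y order_ge_8 in auto)
  then obtain u where u: "u \<in> V - {x, y}" by blast
  then obtain T ends where "block_tree {x, u} T ends"
    using block_tree_grow[OF block_tree_root, of u] order_ge_8 by (auto simp: insert_commute)
  then obtain T' ends' where "block_tree {x, u, y} T' ends'"
    using block_tree_add_y u by blast
  moreover have "card {x, u, y} + 2 + (card V - 5) = card V"
    using u x_neq_y order_ge_8 by auto
  ultimately show ?thesis using block_tree_extend by blast
qed

section \<open>Endpoints with even degrees\<close>

lemma odd_pair_degree_iff:
  assumes "\<forall>e\<in>pair_blocks. ends e \<subseteq> e" "v \<noteq> x" "v \<noteq> y"
  shows "odd (card {e\<in>pair_blocks. v \<in> ends e}) \<longleftrightarrow> (\<exists>e\<in>pair_blocks. v \<in> ends e)"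
proof -
  let ?S = "{e\<in>pair_blocks. v \<in> ends e}"
  have "finite {e\<in>pair_blocks. v \<in> e}" using finite_blocks unfolding pair_blocks_def by simp
  moreover have "?S \<subseteq> {e\<in>pair_blocks. v \<in> e}" using assms(1) by auto
  ultimately have "finite ?S" "card ?S \<le> card {e\<in>pair_blocks. v \<in> e}"
    by (auto intro: finite_subset card_mono)
  then have "card ?S \<le> 1" using card_pair_blocks_containing_le[OF assms(2,3)] by linarith
  have "odd (card ?S) \<longleftrightarrow> ?S \<noteq> {}"
  proof (cases "?S = {}")
    case False
    then have "card ?S \<noteq> 0" using \<open>finite ?S\<close> by simp
    then have "card ?S = 1" using \<open>card ?S \<le> 1\<close> by linarith
    then show ?thesis using False by simp
  next
    case True
    show ?thesis unfolding True by simp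
  qed
  then show ?thesis by blast
qed

lemma pair_block_residue_inter_cases:
  assumes "e \<in> pair_blocks"
  shows "(e - {x, y}) \<inter> Od = {} \<or> (\<exists>m. (e - {x, y}) \<inter> Od = {m}) \<or> (e - {x, y}) \<inter> Od = e - {x, y}"
proof -
  let ?M = "(e - {x, y}) \<inter> Od"
  have "finite (e - {x, y})" using assms finite_block unfolding pair_blocks_def by auto
  then have "finite ?M" "card ?M \<le> 2"
    using card_mono[of "e - {x, y}" ?M] card_pair_block_residue[OF assms] by auto
  then consider "card ?M = 0" | "card ?M = 1" | "card ?M = 2" by linarith
  then show ?thesis
  proof cases
    case 1
    then show ?thesis using \<open>finite ?M\<close> by simp
  next
    case 2
    then show ?thesis by (simp add: card_1_singleton_iff)
  next
    case 3
    then show ?thesis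
      using card_subset_eq[OF \<open>finite (e - {x, y})\<close>, of ?M] card_pair_block_residue[OF assms]
      by simp
  qed
qed

text \<open>Edges for the blocks through x and y realising a prescribed odd-degree set Od.\<close>
definition parity_ends :: "'a set \<Rightarrow> 'a set \<Rightarrow> 'a \<Rightarrow> 'a set \<Rightarrow> 'a set" where
  "parity_ends Od e0 h e =
    (if (e - {x, y}) \<inter> Od = {} then {x, y}
     else if card ((e - {x, y}) \<inter> Od) = 1 then insert (if e = e0 then h else y) ((e - {x, y}) \<inter> Od)
     else (e - {x, y}) \<inter> Od)"

lemma parity_ends_in_block:
  assumes "e \<in> pair_blocks" "h \<in> {x, y}"
  shows "parity_ends Od e0 h e \<subseteq> e \<and> card (parity_ends Od e0 h e) = 2"
proof -
  have "x \<in> e" "y \<in> e" using assms(1) unfolding pair_blocks_def by auto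
  from pair_block_residue_inter_cases[OF assms(1), of Od] show ?thesis
  proof (elim disjE exE)
    assume "(e - {x, y}) \<inter> Od = {}"
    then have "parity_ends Od e0 h e = {x, y}" by (simp add: parity_ends_def)
    then show ?thesis using \<open>x \<in> e\<close> \<open>y \<in> e\<close> x_neq_y by simp
  next
    fix m assume m: "(e - {x, y}) \<inter> Od = {m}"
    define z where "z = (if e = e0 then h else y)"
    have "parity_ends Od e0 h e = {z, m}" using m by (simp add: parity_ends_def z_def)
    moreover have "z \<in> {x, y}" unfolding z_def using assms(2) by simp
    moreover have "m \<in> e" "m \<noteq> x" "m \<noteq> y" using m by auto
    ultimately show ?thesis using \<open>x \<in> e\<close> \<open>y \<in> e\<close> by auto
  next
    assume full: "(e - {x, y}) \<inter> Od = e - {x, y}"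
    then have "card ((e - {x, y}) \<inter> Od) = 2" using card_pair_block_residue[OF assms(1)] by simp
    then have "(e - {x, y}) \<inter> Od \<noteq> {}" "card ((e - {x, y}) \<inter> Od) \<noteq> 1" by auto
    then have "parity_ends Od e0 h e = e - {x, y}" using full by (simp add: parity_ends_def)
    then show ?thesis using card_pair_block_residue[OF assms(1)] by auto
  qed
qed

lemma parity_ends_residue:
  assumes "h \<in> {x, y}"
  shows "parity_ends Od e0 h e - {x, y} = (e - {x, y}) \<inter> Od"
proof (cases "(e - {x, y}) \<inter> Od = {} \<or> card ((e - {x, y}) \<inter> Od) \<noteq> 1")
  case True
  then show ?thesis by (auto simp: parity_ends_def)
next
  case False
  then have "parity_ends Od e0 h e = insert (if e = e0 then h else y) ((e - {x, y}) \<inter> Od)"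
    by (simp add: parity_ends_def)
  then show ?thesis using assms by auto
qed

lemma card_parity_ends_containing_x:
  assumes "e0 \<in> pair_blocks" "card ((e0 - {x, y}) \<inter> Od) = 1"
  shows "card {e\<in>pair_blocks. x \<in> parity_ends Od e0 h e} =
    card {e\<in>pair_blocks. (e - {x, y}) \<inter> Od = {}} + of_bool (h = x)"
proof -
  let ?N = "{e\<in>pair_blocks. (e - {x, y}) \<inter> Od = {}}"
  have "x \<in> parity_ends Od e0 h e \<longleftrightarrow> e \<in> ?N \<or> (e = e0 \<and> h = x)" if "e \<in> pair_blocks" for e
    using pair_block_residue_inter_cases[OF that, of Od]
  proof (elim disjE exE)
    fix m assume "(e - {x, y}) \<inter> Od = {m}"
    then show ?thesis using that x_neq_y unfolding parity_ends_def by auto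
  next
    assume full: "(e - {x, y}) \<inter> Od = e - {x, y}"
    then have two: "card ((e - {x, y}) \<inter> Od) = 2" using card_pair_block_residue[OF that] by simp
    then have "(e - {x, y}) \<inter> Od \<noteq> {}" by auto
    moreover have "e \<noteq> e0" using two assms(2) by auto
    ultimately show ?thesis using full two unfolding parity_ends_def by simp
  qed (use that in \<open>simp add: parity_ends_def\<close>)
  then have "{e\<in>pair_blocks. x \<in> parity_ends Od e0 h e} = (if h = x then insert e0 ?N else ?N)"
    using assms(1) by auto
  moreover have "e0 \<notin> ?N" using assms(2) by auto
  moreover have "finite ?N" using finite_blocks unfolding pair_blocks_def by simp
  ultimately show ?thesis by simp
qed

text \<open>The residual pairs of the blocks through x and y partition V - {x, y}, so the points other
  than x and y get the right parity automatically; h fixes the parity at x, and then the parity at y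
  is forced.\<close>
lemma pair_blocks_realise_parity:
  assumes Od: "Od \<subseteq> V" "even (card Od)"
    and e0: "e0 \<in> pair_blocks" "card ((e0 - {x, y}) \<inter> Od) = 1"
  shows "\<exists>ends. (\<forall>e\<in>pair_blocks. ends e \<subseteq> e \<and> card (ends e) = 2) \<and>
    (\<forall>v\<in>V. odd (card {e\<in>pair_blocks. v \<in> ends e}) \<longleftrightarrow> v \<in> Od)"
proof -
  define h where
    "h = (if odd (card {e\<in>pair_blocks. (e - {x, y}) \<inter> Od = {}}) \<longleftrightarrow> x \<in> Od then y else x)"
  let ?ends = "parity_ends Od e0 h"
  have "h \<in> {x, y}" unfolding h_def by simp
  then have ends_ok: "\<forall>e\<in>pair_blocks. ?ends e \<subseteq> e \<and> card (?ends e) = 2"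
    using parity_ends_in_block by blast
  have inner: "odd (card {e\<in>pair_blocks. v \<in> ?ends e}) \<longleftrightarrow> v \<in> Od"
    if v: "v \<in> V" "v \<noteq> x" "v \<noteq> y" for v
  proof -
    obtain ev where ev: "ev \<in> pair_blocks" "v \<in> ev" "\<And>e. e \<in> pair_blocks \<Longrightarrow> v \<in> e \<Longrightarrow> e = ev"
      using ex1_pair_block_containing[OF v] by blast
    have "(\<exists>e\<in>pair_blocks. v \<in> ?ends e) \<longleftrightarrow> v \<in> ?ends ev"
      using ev ends_ok by blast
    also have "\<dots> \<longleftrightarrow> v \<in> Od"
      using parity_ends_residue[OF \<open>h \<in> {x, y}\<close>, of Od e0 ev] ev(2) v by blast
    finally show ?thesis using odd_pair_degree_iff[of ?ends v] ends_ok v by blast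
  qed
  have at_x: "odd (card {e\<in>pair_blocks. x \<in> ?ends e}) \<longleftrightarrow> x \<in> Od"
    using card_parity_ends_containing_x[OF e0, of h] x_neq_y unfolding h_def by auto
  have "finite pair_blocks" using finite_blocks unfolding pair_blocks_def by simp
  moreover have "\<forall>e\<in>pair_blocks. ?ends e \<subseteq> V \<and> card (?ends e) = 2"
    using ends_ok block_subset unfolding pair_blocks_def by blast
  moreover have "\<forall>v\<in>V - {y}. odd (card {e\<in>pair_blocks. v \<in> ?ends e}) \<longleftrightarrow> v \<in> Od"
    using inner at_x by blast
  ultimately have "odd (card {e\<in>pair_blocks. y \<in> ?ends e}) \<longleftrightarrow> y \<in> Od"
    by (rule odd_degree_determined[OF finite_points _ _ Od y_in_V])
  then have "\<forall>v\<in>V. odd (card {e\<in>pair_blocks. v \<in> ?ends e}) \<longleftrightarrow> v \<in> Od"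
    using inner at_x by blast
  then show ?thesis using ends_ok by blast
qed

lemma ex_spare_block:
  assumes "block_tree V T ends"
  shows "\<exists>g. g \<in> B - pair_blocks - T"
proof (rule ccontr)
  assume none: "\<not> ?thesis"
  let ?X = "{e\<in>B. x \<in> e \<and> y \<notin> e}" and ?Y = "{e\<in>B. y \<in> e \<and> x \<notin> e}"
  have T: "finite T" "card T + 1 = card V" using assms unfolding block_tree_def by auto
  have "?X \<union> ?Y \<subseteq> T" using none unfolding pair_blocks_def by auto
  then have "card (?X \<union> ?Y) \<le> card T" using T(1) by (rule card_mono[rotated])
  moreover have "card (?X \<union> ?Y) = card ?X + card ?Y"
    using finite_blocks by (intro card_Un_disjoint) auto
  ultimately show False
    using card_blocks_containing_avoiding[OF x_in_V y_in_V x_neq_y]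
      card_blocks_containing_avoiding[OF y_in_V x_in_V x_neq_y[symmetric]] T(2) order_ge_8_bound
    by linarith
qed

lemma spare_block_points:
  assumes "g \<in> B - pair_blocks"
  obtains c1 c2 c3 where "{c1, c2, c3} \<subseteq> g - {x, y}" "c1 \<noteq> c2" "c1 \<noteq> c3" "c2 \<noteq> c3"
    "\<not> (\<exists>e\<in>pair_blocks. {c1, c2} \<subseteq> e)"
proof -
  have "finite g" "card g = 4" using assms finite_block card_block by auto
  have "\<not> {x, y} \<subseteq> g" using assms unfolding pair_blocks_def by auto
  then have "card (g \<inter> {x, y}) \<le> 1" by (cases "x \<in> g"; cases "y \<in> g") auto
  then have "3 \<le> card (g - {x, y})"
    using \<open>finite g\<close> \<open>card g = 4\<close> by (simp add: card_Diff_subset_Int)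
  then obtain R where "R \<subseteq> g - {x, y}" "card R = 3" by (meson obtain_subset_with_card_n)
  then obtain a b c where abc: "{a, b, c} \<subseteq> g - {x, y}" "a \<noteq> b" "b \<noteq> c" "a \<noteq> c"
    by (metis card_3_iff)
  then have "a \<in> V" using assms block_subset by auto
  show ?thesis
  proof (cases "\<exists>e\<in>pair_blocks. {a, b} \<subseteq> e")
    case False
    then show ?thesis using that[of a b c] abc by auto
  next
    case True
    then obtain e where e: "e \<in> pair_blocks" "{a, b} \<subseteq> e" by blast
    have "\<not> (\<exists>f\<in>pair_blocks. {a, c} \<subseteq> f)"
    proof
      assume "\<exists>f\<in>pair_blocks. {a, c} \<subseteq> f"
      then obtain f where "f \<in> pair_blocks" "{a, c} \<subseteq> f" by blast
      then have "f = e" using ex1_pair_block_containing[of a] \<open>a \<in> V\<close> abc e by auto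
      then have "{x, y, a, b, c} \<subseteq> e" using e \<open>{a, c} \<subseteq> f\<close> unfolding pair_blocks_def by auto
      then have "card {x, y, a, b, c} \<le> card e"
        using e finite_block unfolding pair_blocks_def by (intro card_mono) auto
      moreover have "card {x, y, a, b, c} = 5" using abc x_neq_y by auto
      ultimately show False using e card_block unfolding pair_blocks_def by auto
    qed
    then show ?thesis using that[of a c b] abc by auto
  qed
qed

lemma ex_two_point_choice: "\<exists>ends. \<forall>e\<in>B. ends e \<subseteq> e \<and> card (ends e) = 2"
proof -
  have "\<exists>P. P \<subseteq> e \<and> card P = 2" if "e \<in> B" for e
  proof -
    have "2 \<le> card e" using card_block[OF that] by simp
    then obtain P where "P \<subseteq> e" "card P = 2" by (rule obtain_subset_with_card_n)
    then show ?thesis by blast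
  qed
  then have "\<forall>e\<in>B. \<exists>P. P \<subseteq> e \<and> card P = 2" by blast
  then show ?thesis by (rule bchoice)
qed

lemma pair_block_partner:
  assumes "c \<in> V" "c \<noteq> x" "c \<noteq> y"
  obtains e c' where "e \<in> pair_blocks" "e - {x, y} = {c, c'}" "c' \<noteq> c"
proof -
  obtain e where e: "e \<in> pair_blocks" "c \<in> e" using ex1_pair_block_containing[OF assms] by blast
  obtain a b where ab: "e - {x, y} = {a, b}" "a \<noteq> b"
    using card_pair_block_residue[OF e(1)] by (meson card_2_iff)
  have "c = a \<or> c = b" using ab e assms by blast
  then show ?thesis
  proof
    assume "c = a"
    then show ?thesis using that[OF e(1), of b] ab by simp
  next
    assume "c = b"
    then show ?thesis using that[OF e(1), of a] ab by (simp add: insert_commute)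
  qed
qed

text \<open>Endpoints for the blocks outside pair_blocks: the tree edges, two points of a spare block g,
  and arbitrary pairs elsewhere. Moving the endpoint c1 of g to c2 flips the parity at c1 but not at
  the partner c1' of c1 in its pair block, so one of the two choices makes the odd-degree set meet
  that partner pair exactly once.\<close>
lemma ex_outer_choice:
  assumes tree: "block_tree V T ends"
  obtains q e1 where "\<forall>e\<in>B - pair_blocks. q e \<subseteq> e \<and> card (q e) = 2" "\<forall>e\<in>T. q e = ends e"
    "e1 \<in> pair_blocks" "card ((e1 - {x, y}) \<inter> {v\<in>V. odd (card {e\<in>B - pair_blocks. v \<in> q e})}) = 1"
proof -
  obtain g where g: "g \<in> B - pair_blocks - T" using ex_spare_block[OF tree] by blast
  then obtain c1 c2 c3 where c: "{c1, c2, c3} \<subseteq> g - {x, y}" "c1 \<noteq> c2" "c1 \<noteq> c3" "c2 \<noteq> c3"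
      "\<not> (\<exists>e\<in>pair_blocks. {c1, c2} \<subseteq> e)"
    using spare_block_points by blast
  obtain some where some: "\<forall>e\<in>B. some e \<subseteq> e \<and> card (some e) = 2"
    using ex_two_point_choice by blast
  define q where "q A = (\<lambda>e. if e \<in> T then ends e else some e)(g := A)" for A
  define odd_set where "odd_set A = {v\<in>V. odd (card {e\<in>B - pair_blocks. v \<in> q A e})}" for A
  have switch: "v \<in> odd_set {c3, c2} \<longleftrightarrow> (v \<in> odd_set {c3, c1} \<longleftrightarrow> (v \<in> {c3, c2} \<longleftrightarrow> v \<in> {c3, c1}))"
    if "v \<in> V" for v
    using odd_degree_update[of "B - pair_blocks" g v "q {c3, c1}" "{c3, c2}"] finite_blocks g that
    unfolding odd_set_def q_def by simp
  have "c1 \<in> V" "c1 \<noteq> x" "c1 \<noteq> y" using c g block_subset by auto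
  then obtain e1 c1' where e1: "e1 \<in> pair_blocks" and c1': "e1 - {x, y} = {c1, c1'}" "c1' \<noteq> c1"
    by (rule pair_block_partner)
  have "c1' \<noteq> c2" using c(5) e1 c1' by blast
  have "c1' \<in> V" using c1' e1 block_subset unfolding pair_blocks_def by blast
  have "card ({c1, c1'} \<inter> odd_set {c3, c1}) = 1 \<or> card ({c1, c1'} \<inter> odd_set {c3, c2}) = 1"
  proof (rule card_pair_inter_eq_1_if_flip[OF c1'(2)[symmetric]])
    show "c1 \<in> odd_set {c3, c2} \<longleftrightarrow> c1 \<notin> odd_set {c3, c1}"
      using switch[OF \<open>c1 \<in> V\<close>] c by auto
    show "c1' \<in> odd_set {c3, c2} \<longleftrightarrow> c1' \<in> odd_set {c3, c1}"
      using switch[OF \<open>c1' \<in> V\<close>] \<open>c1' \<noteq> c2\<close> c1'(2) by auto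
  qed
  then obtain A where A: "A = {c3, c1} \<or> A = {c3, c2}" "card ({c1, c1'} \<inter> odd_set A) = 1" by blast
  have "A \<subseteq> g" using A(1) c(1) by blast
  have "card A = 2" using A(1) c(3,4) by auto
  show ?thesis
  proof (rule that)
    show "\<forall>e\<in>B - pair_blocks. q A e \<subseteq> e \<and> card (q A e) = 2"
      using tree some \<open>A \<subseteq> g\<close> \<open>card A = 2\<close> g unfolding q_def block_tree_def by auto
    show "\<forall>e\<in>T. q A e = ends e" using g unfolding q_def by auto
    show "card ((e1 - {x, y}) \<inter> {v\<in>V. odd (card {e\<in>B - pair_blocks. v \<in> q A e})}) = 1"
      using A(2) c1'(1) unfolding odd_set_def by simp
  qed (rule e1(1))
qed

lemma ex_even_connected_choice:
  obtains ends where "\<forall>e\<in>B. ends e \<subseteq> e \<and> card (ends e) = 2"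
    "\<forall>v\<in>V. even (card {e\<in>B. v \<in> ends e})" "\<forall>z\<in>V. (x, z) \<in> (link_rel B ends)\<^sup>*"
proof -
  obtain T ends_T where tree: "block_tree V T ends_T" using ex_spanning_block_tree by blast
  obtain q e1 where q: "\<forall>e\<in>B - pair_blocks. q e \<subseteq> e \<and> card (q e) = 2" "\<forall>e\<in>T. q e = ends_T e"
    and e1: "e1 \<in> pair_blocks"
      "card ((e1 - {x, y}) \<inter> {v\<in>V. odd (card {e\<in>B - pair_blocks. v \<in> q e})}) = 1"
    using ex_outer_choice[OF tree] by blast
  let ?Od = "{v\<in>V. odd (card {e\<in>B - pair_blocks. v \<in> q e})}"
  have "even (card ?Od)"
    by (rule even_card_odd_degree) (use finite_points finite_blocks q(1) block_subset in auto)
  then obtain ends_F where F: "\<forall>e\<in>pair_blocks. ends_F e \<subseteq> e \<and> card (ends_F e) = 2"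
      "\<forall>v\<in>V. odd (card {e\<in>pair_blocks. v \<in> ends_F e}) \<longleftrightarrow> v \<in> ?Od"
    using pair_blocks_realise_parity[of ?Od e1] e1 by auto
  define ends where "ends e = (if e \<in> pair_blocks then ends_F e else q e)" for e
  have "\<forall>e\<in>B. ends e \<subseteq> e \<and> card (ends e) = 2" using F(1) q(1) unfolding ends_def by auto
  moreover have "even (card {e\<in>B. v \<in> ends e})" if "v \<in> V" for v
  proof -
    have "{e\<in>B. v \<in> ends e} = {e\<in>pair_blocks. v \<in> ends_F e} \<union> {e\<in>B - pair_blocks. v \<in> q e}"
      unfolding ends_def pair_blocks_def by auto
    then have "card {e\<in>B. v \<in> ends e} =
        card {e\<in>pair_blocks. v \<in> ends_F e} + card {e\<in>B - pair_blocks. v \<in> q e}"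
      using finite_blocks by (simp add: card_Un_disjoint pair_blocks_def disjoint_iff)
    then show ?thesis using F(2) that by auto
  qed
  moreover have "(x, z) \<in> (link_rel B ends)\<^sup>*" if "z \<in> V" for z
  proof -
    have "link_rel T ends_T \<subseteq> link_rel B ends"
      using tree q(2) unfolding link_rel_def ends_def block_tree_def by fastforce
    then show ?thesis using tree that rtrancl_mono unfolding block_tree_def by blast
  qed
  ultimately show ?thesis using that by blast
qed

lemma spanning_euler_tour: "has_spanning_euler_tour V B"
proof -
  obtain ends where ends: "\<forall>e\<in>B. ends e \<subseteq> e \<and> card (ends e) = 2"
      "\<forall>v\<in>V. even (card {e\<in>B. v \<in> ends e})" "\<forall>z\<in>V. (x, z) \<in> (link_rel B ends)\<^sup>*"
    using ex_even_connected_choice by blast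
  then obtain pa pb where ends_eq: "\<forall>e\<in>B. ends e = {pa e, pb e} \<and> pa e \<noteq> pb e"
    using ex_endpoint_functions[of B ends] by blast
  interpret even_multigraph V B pa pb
  proof
    show "pa e \<in> V \<and> pb e \<in> V" "pa e \<noteq> pb e" if "e \<in> B" for e
      using ends(1) ends_eq that block_subset by blast+
    show "even (card {e\<in>B. v \<in> {pa e, pb e}})" if "v \<in> V" for v
      using ends(2) that ends_eq by (metis (no_types, lifting) Collect_cong)
  qed (simp_all add: finite_points finite_blocks)
  have "link_rel B ends \<subseteq> edge_rel B pa pb"
    unfolding link_rel_def edge_rel_def using ends_eq by (auto simp: doubleton_eq_iff)
  then have "(x, z) \<in> (edge_rel B pa pb)\<^sup>*" if "z \<in> V" for z
    using ends(3) that rtrancl_mono by blast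
  then have connected: "\<forall>u\<in>V. \<forall>v\<in>V. (u, v) \<in> (edge_rel B pa pb)\<^sup>*"
    using sym_edge_rel by (meson rtrancl_trans sym_conv_converse_eq sym_rtrancl symD)
  have "(card V - 1) * (card V - 2) \<noteq> 0" using order_ge_8 by simp
  then have "card {e\<in>B. x \<in> e} \<noteq> 0"
    using card_blocks_containing_point[OF x_in_V] by (metis mult_0_right)
  then have "B \<noteq> {}" by auto
  then obtain vs es where tour: "length vs = length es" "distinct es" "set es = B" "set vs = V"
      "\<forall>i<length es. {vs ! i, vs ! ((i + 1) mod length es)} = {pa (es ! i), pb (es ! i)}"
    using euler_circuit[OF _ connected] by blast
  moreover have "\<forall>e\<in>B. {pa e, pb e} \<subseteq> e \<and> pa e \<noteq> pb e" using ends ends_eq by auto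
  ultimately have "closed_walk B vs es"
    using \<open>B \<noteq> {}\<close> by (intro closed_walk_if_circuit) auto
  then show ?thesis
    using tour unfolding has_spanning_euler_tour_def euler_tour_def by blast
qed

end

lemma euler_tour_two_edges:
  assumes "euler_tour B vs es"
  obtains e f where "e \<in> B" "f \<in> B" "e \<noteq> f"
proof -
  have walk: "closed_walk B vs es" and "distinct es" "set es = B"
    using assms unfolding euler_tour_def by auto
  then have "length vs = length es" "length vs \<ge> 1"
    unfolding closed_walk_def by auto
  moreover have "length vs \<noteq> 1"
  proof
    assume "length vs = 1"
    moreover have "\<forall>i<length vs. es ! i \<in> B \<and> {vs ! i, vs ! ((i + 1) mod length vs)} \<subseteq> es ! i \<and>
        vs ! i \<noteq> vs ! ((i + 1) mod length vs)"
      using walk unfolding closed_walk_def by (elim conjE)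
    ultimately show False by (auto dest: spec[of _ 0])
  qed
  ultimately have "1 < length es" by simp
  moreover have "0 < length es" using calculation by linarith
  ultimately have "es ! 0 \<in> set es" "es ! 1 \<in> set es" "es ! 0 \<noteq> es ! 1"
    using nth_mem nth_eq_iff_index_eq[OF \<open>distinct es\<close>] by (blast, blast, simp)
  then show ?thesis using that \<open>set es = B\<close> by blast
qed

theorem corollary1p4:
  fixes V :: "'a set" and B :: "'a set set" and n :: nat
  assumes "SQS V B" and "card V = n"
  shows "has_spanning_euler_tour V B \<longleftrightarrow> n \<ge> 8 \<and> (n mod 6 = 2 \<or> n mod 6 = 4)"
proof -
  interpret steiner_quadruple_system V B by unfold_locales (rule assms(1))
  show ?thesis
  proof
    assume "has_spanning_euler_tour V B"
    then obtain vs es where "euler_tour B vs es" unfolding has_spanning_euler_tour_def by blast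
    then obtain e f where "e \<in> B" "f \<in> B" "e \<noteq> f" by (rule euler_tour_two_edges)
    then have "n \<ge> 5" using card_points_ge_5 assms(2) by blast
    then show "n \<ge> 8 \<and> (n mod 6 = 2 \<or> n mod 6 = 4)"
      using order_mod_6 assms(2) by presburger
  next
    assume "n \<ge> 8 \<and> (n mod 6 = 2 \<or> n mod 6 = 4)"
    then obtain x y where "x \<in> V" "y \<in> V" "x \<noteq> y"
      using ex_two_points assms(2) by auto
    then interpret sqs_with_pair V B x y
      using \<open>n \<ge> 8 \<and> _\<close> assms(2) by unfold_locales auto
    show "has_spanning_euler_tour V B" by (rule spanning_euler_tour)
  qed
qed

end
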